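(* Let $\Gamma$ be a finite connected $m$-regular graph and let $u$ be an eigenvector of (the adjacency matrix of) $\Gamma$ which takes exactly three distinct values $a_0,a_1,a_2$. For $i\in\{0,1,2\}$ let $C^i$ be the set of vertices $x$ with $u_x=a_i$. Suppose that there are no edges between $C^0$ and $C^2$, and that there is a number $\beta_1$ such that every vertex of $C^1$ is adjacent to exactly $\beta_1$ vertices of $C^2$. Then for all $i,j\in\{0,1,2\}$ the number of neighbours in $C^j$ of a vertex $x\in C^i$ does not depend on the choice of $x\in C^i$; consequently $C^0$ is a completely regular code in $\Gamma$, with distance partition $(C^0,C^1,C^2)$ and covering radius $2$.
   Context: For a nonempty vertex set $C$ of a connected regular graph, $C_i$ denotes the set of vertices at distance exactly $i$ from $C$, and the covering radius $\rho$ is the largest $i$ with $C_i\neq\emptyset$; $(C_0=C,C_1,\dots,C_\rho)$ is the distance partition. $C$ is a completely regular code if there are numbers $\gamma_i,\alpha_i,\beta_i$ such that every vertex of $C_i$ has exactly $\gamma_i$ neighbours in $C_{i-1}$, $\alpha_i$ neighbours in $C_i$ and $\beta_i$ neighbours in $C_{i+1}$, for all $i$. *)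

theory Defs
  imports Complex_Main
begin

definition simple_graph :: "'a set \<Rightarrow> ('a \<Rightarrow> 'a \<Rightarrow> bool) \<Rightarrow> bool" where
  "simple_graph V E \<longleftrightarrow> finite V \<and> (\<forall>x y. E x y \<longrightarrow> x \<in> V \<and> y \<in> V)
     \<and> (\<forall>x y. E x y \<longrightarrow> E y x) \<and> (\<forall>x. \<not> E x x)"

definition neighbours :: "'a set \<Rightarrow> ('a \<Rightarrow> 'a \<Rightarrow> bool) \<Rightarrow> 'a \<Rightarrow> 'a set" where
  "neighbours V E x = {y \<in> V. E x y}"

definition regular :: "'a set \<Rightarrow> ('a \<Rightarrow> 'a \<Rightarrow> bool) \<Rightarrow> nat \<Rightarrow> bool" where
  "regular V E m \<longleftrightarrow> (\<forall>x \<in> V. card (neighbours V E x) = m)"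

text \<open>A walk: nonempty list of vertices, consecutive ones adjacent; its length is
  length xs - 1.\<close>
definition walk :: "'a set \<Rightarrow> ('a \<Rightarrow> 'a \<Rightarrow> bool) \<Rightarrow> 'a list \<Rightarrow> bool" where
  "walk V E xs \<longleftrightarrow> xs \<noteq> [] \<and> set xs \<subseteq> V \<and> (\<forall>i. Suc i < length xs \<longrightarrow> E (xs ! i) (xs ! Suc i))"

definition connected_graph :: "'a set \<Rightarrow> ('a \<Rightarrow> 'a \<Rightarrow> bool) \<Rightarrow> bool" where
  "connected_graph V E \<longleftrightarrow> V \<noteq> {} \<and>
     (\<forall>x \<in> V. \<forall>y \<in> V. \<exists>xs. walk V E xs \<and> hd xs = x \<and> last xs = y)"

text \<open>Distance from a vertex set C to a vertex x (meaningful when x is reachable from C).\<close>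
definition reachable_from :: "'a set \<Rightarrow> ('a \<Rightarrow> 'a \<Rightarrow> bool) \<Rightarrow> 'a set \<Rightarrow> 'a \<Rightarrow> nat \<Rightarrow> bool" where
  "reachable_from V E C x n \<longleftrightarrow> (\<exists>xs. walk V E xs \<and> hd xs \<in> C \<and> last xs = x \<and> length xs = Suc n)"

definition dist_set :: "'a set \<Rightarrow> ('a \<Rightarrow> 'a \<Rightarrow> bool) \<Rightarrow> 'a set \<Rightarrow> 'a \<Rightarrow> nat" where
  "dist_set V E C x = (LEAST n. reachable_from V E C x n)"

definition dist_layer :: "'a set \<Rightarrow> ('a \<Rightarrow> 'a \<Rightarrow> bool) \<Rightarrow> 'a set \<Rightarrow> nat \<Rightarrow> 'a set" where
  "dist_layer V E C i = {x \<in> V. (\<exists>n. reachable_from V E C x n) \<and> dist_set V E C x = i}"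

definition covering_radius :: "'a set \<Rightarrow> ('a \<Rightarrow> 'a \<Rightarrow> bool) \<Rightarrow> 'a set \<Rightarrow> nat" where
  "covering_radius V E C = Max {i. dist_layer V E C i \<noteq> {}}"

definition completely_regular :: "'a set \<Rightarrow> ('a \<Rightarrow> 'a \<Rightarrow> bool) \<Rightarrow> 'a set \<Rightarrow> bool" where
  "completely_regular V E C \<longleftrightarrow> C \<noteq> {} \<and> C \<subseteq> V \<and>
     (\<forall>i. \<exists>\<gamma> \<alpha> \<beta>. \<forall>x \<in> dist_layer V E C i.
        card {y \<in> (if i = 0 then {} else dist_layer V E C (i - 1)). E x y} = \<gamma> \<and>
        card {y \<in> dist_layer V E C i. E x y} = \<alpha> \<and>
        card {y \<in> dist_layer V E C (Suc i). E x y} = \<beta>)"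

end

theory Submission
  imports Defs
begin

text \<open>For a vertex x with u x = a i, let n_j be its number of neighbours in C^j. Regularity and
  the eigenvalue equation give n_0 + n_1 + n_2 = m and n_0 a_0 + n_1 a_1 + n_2 a_2 = \<theta> a_i, so
  as soon as one n_k is known the other two are the solution of a 2 \<times> 2 system with determinant
  a_s - a_t \<noteq> 0. On C^0 and C^2 one count is 0, on C^1 it is \<beta>_1; hence all counts are constant
  on each C^i. Connectivity yields one edge C^0 -- C^1 and one edge C^1 -- C^2, and by constancy every
  vertex of C^1 (resp. C^2) has a neighbour in C^0 (resp. C^1). So the index i is a level function
  whose edges change the level by at most one and along which every vertex can descend; such a
  level function is the distance from level 0.\<close>

lemma walk_singleton [simp]: "walk V E [x] \<longleftrightarrow> x \<in> V"
  by (simp add: walk_def)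

lemma walk_snoc:
  assumes "xs \<noteq> []"
  shows "walk V E (xs @ [x]) \<longleftrightarrow> walk V E xs \<and> x \<in> V \<and> E (last xs) x"
proof -
  have "(\<forall>i. Suc i < length (xs @ [x]) \<longrightarrow> E ((xs @ [x]) ! i) ((xs @ [x]) ! Suc i)) \<longleftrightarrow>
        (\<forall>i. Suc i < length xs \<longrightarrow> E (xs ! i) (xs ! Suc i)) \<and> E (last xs) x"
    using assms by (auto simp: nth_append last_conv_nth less_Suc_eq)
      (metis One_nat_def diff_Suc_1)
  with assms show ?thesis unfolding walk_def by auto
qed

lemma walk_leaves_set:
  assumes "walk V E xs" "hd xs \<in> S" "last xs \<notin> S"
  shows "\<exists>x \<in> S. \<exists>y. y \<notin> S \<and> E x y"
  using assms
proof (induction xs rule: rev_induct)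
  case Nil
  then show ?case by (simp add: walk_def)
next
  case (snoc x xs)
  show ?case
  proof (cases "xs = []")
    case True
    then show ?thesis using snoc.prems by simp
  next
    case False
    with snoc.prems have "walk V E xs" "hd xs \<in> S" "E (last xs) x" "x \<notin> S"
      by (simp_all add: walk_snoc)
    then show ?thesis using snoc.IH by (cases "last xs \<in> S") auto
  qed
qed

lemma connected_graph_edge_leaving:
  assumes "connected_graph V E" "x \<in> V \<inter> S" "y \<in> V - S"
  shows "\<exists>x \<in> S. \<exists>y. y \<notin> S \<and> E x y"
proof -
  obtain xs where "walk V E xs" "hd xs = x" "last xs = y"
    using assms unfolding connected_graph_def by blast
  then show ?thesis using assms(2,3) walk_leaves_set by fastforce
qed

subsection \<open>Distance layers of a level function\<close>

context
  fixes V :: "'a set" and E :: "'a \<Rightarrow> 'a \<Rightarrow> bool" and C :: "'a set" and level :: "'a \<Rightarrow> nat"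
  assumes C_eq: "C = {x \<in> V. level x = 0}"
    and level_step: "\<And>x y. E x y \<Longrightarrow> level y \<le> Suc (level x)"
    and level_descent: "\<And>x. x \<in> V \<Longrightarrow> 0 < level x \<Longrightarrow> \<exists>y \<in> V. E y x \<and> Suc (level y) = level x"
begin

lemma reachable_from_level: "x \<in> V \<Longrightarrow> reachable_from V E C x (level x)"
proof (induction "level x" arbitrary: x)
  case 0
  then show ?case unfolding reachable_from_def C_eq
    by (intro exI[of _ "[x]"]) simp
next
  case (Suc n)
  obtain y where y: "y \<in> V" "E y x" "Suc (level y) = level x"
    using level_descent Suc.prems Suc.hyps(2) by force
  have "reachable_from V E C y (level y)"
    using Suc.hyps y by simp
  then obtain xs where xs: "walk V E xs" "hd xs \<in> C" "last xs = y" "length xs = Suc (level y)"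
    by (auto simp: reachable_from_def)
  then have "xs \<noteq> []" by auto
  with xs y Suc.prems show ?case unfolding reachable_from_def
    by (intro exI[of _ "xs @ [x]"]) (auto simp: walk_snoc)
qed

lemma level_le_walk_length: "walk V E xs \<Longrightarrow> hd xs \<in> C \<Longrightarrow> level (last xs) < length xs"
proof (induction xs rule: rev_induct)
  case (snoc x xs)
  show ?case
  proof (cases "xs = []")
    case True
    then show ?thesis using snoc.prems by (simp add: C_eq)
  next
    case False
    with snoc have "level (last xs) < length xs" "E (last xs) x"
      by (simp_all add: walk_snoc)
    then show ?thesis using level_step[of "last xs" x] by simp
  qed
qed (simp add: walk_def)

lemma dist_set_eq_level: "x \<in> V \<Longrightarrow> dist_set V E C x = level x"
  unfolding dist_set_def
proof (rule Least_equality)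
  show "x \<in> V \<Longrightarrow> reachable_from V E C x (level x)" by (rule reachable_from_level)
  show "reachable_from V E C x n \<Longrightarrow> level x \<le> n" for n
    using level_le_walk_length by (fastforce simp: reachable_from_def)
qed

lemma dist_layer_eq_level: "dist_layer V E C i = {x \<in> V. level x = i}"
  using reachable_from_level dist_set_eq_level unfolding dist_layer_def by auto

lemma covering_radius_eq_Max_level: "covering_radius V E C = Max (level ` V)"
proof -
  have "{i. dist_layer V E C i \<noteq> {}} = level ` V"
    unfolding dist_layer_eq_level by auto
  then show ?thesis unfolding covering_radius_def by simp
qed

end

lemma completely_regular_if_layer_counts_constant:
  assumes "C \<noteq> {}" "C \<subseteq> V"
    and "\<And>i j. \<exists>c. \<forall>x \<in> dist_layer V E C i. card {y \<in> dist_layer V E C j. E x y} = c"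
  shows "completely_regular V E C"
  unfolding completely_regular_def
proof (intro conjI allI)
  fix i
  obtain c where c: "\<And>i j x. x \<in> dist_layer V E C i \<Longrightarrow> card {y \<in> dist_layer V E C j. E x y} = c i j"
    using assms(3) by metis
  show "\<exists>\<gamma> \<alpha> \<beta>. \<forall>x \<in> dist_layer V E C i.
          card {y \<in> (if i = 0 then {} else dist_layer V E C (i - 1)). E x y} = \<gamma> \<and>
          card {y \<in> dist_layer V E C i. E x y} = \<alpha> \<and>
          card {y \<in> dist_layer V E C (Suc i). E x y} = \<beta>"
    by (intro exI[of _ "if i = 0 then 0 else c i (i - 1)"] exI[of _ "c i i"] exI[of _ "c i (Suc i)"])
      (simp add: c)
qed (use assms in auto)

subsection \<open>Neighbour counts of a three-valued eigenvector\<close>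

lemma two_unknowns_unique:
  fixes p q p' q' s t :: real
  assumes "p + q = p' + q'" "p * s + q * t = p' * s + q' * t" "s \<noteq> t"
  shows "p = p' \<and> q = q'"
proof -
  have "(q - q') * (t - s) = 0"
  proof -
    have "p' = p + q - q'" using assms(1) by simp
    with assms(2) show ?thesis by (simp add: algebra_simps)
  qed
  with assms show ?thesis by simp
qed

locale three_valued_eigenvector =
  fixes V :: "'a set" and E :: "'a \<Rightarrow> 'a \<Rightarrow> bool" and m :: nat
    and u :: "'a \<Rightarrow> real" and \<theta> :: real and a :: "nat \<Rightarrow> real"
  assumes graph: "simple_graph V E"
    and reg: "regular V E m"
    and eigen: "\<forall>x \<in> V. (\<Sum>y \<in> neighbours V E x. u y) = \<theta> * u x"
    and dist_vals: "a 0 \<noteq> a 1" "a 0 \<noteq> a 2" "a 1 \<noteq> a 2"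
    and vals: "u ` V = {a 0, a 1, a 2}"
begin

definition cell :: "nat \<Rightarrow> 'a set" where
  "cell j = {x \<in> V. u x = a j}"

definition nbr_count :: "nat \<Rightarrow> 'a \<Rightarrow> nat" where
  "nbr_count j x = card {y \<in> cell j. E x y}"

lemma edge_sym: "E x y \<Longrightarrow> E y x"
  and edge_in_V: "E x y \<Longrightarrow> x \<in> V \<and> y \<in> V"
  using graph unfolding simple_graph_def by auto

lemma finite_nbrs_in_cell: "finite {y \<in> cell j. E x y}"
  using graph unfolding simple_graph_def cell_def by auto

lemma cell_subset: "cell j \<subseteq> V"
  by (auto simp: cell_def)

lemma cells_cover: "x \<in> V \<Longrightarrow> x \<in> cell 0 \<or> x \<in> cell 1 \<or> x \<in> cell 2"
  using vals unfolding cell_def by auto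

lemma cells_disjoint: "cell 0 \<inter> cell 1 = {}" "cell 0 \<inter> cell 2 = {}" "cell 1 \<inter> cell 2 = {}"
  using dist_vals unfolding cell_def by auto

lemma cell_nonempty: "i < 3 \<Longrightarrow> cell i \<noteq> {}"
  using vals unfolding cell_def by (auto simp: eval_nat_numeral less_Suc_eq) (metis imageE insertI1 insertI2)+

lemma nbr_count_pos_iff: "0 < nbr_count j x \<longleftrightarrow> (\<exists>y \<in> cell j. E x y)"
  using finite_nbrs_in_cell by (auto simp: nbr_count_def card_gt_0_iff)

lemma neighbours_eq_cells:
  "neighbours V E x = {y \<in> cell 0. E x y} \<union> {y \<in> cell 1. E x y} \<union> {y \<in> cell 2. E x y}"
  using cells_cover unfolding neighbours_def cell_def by auto

lemma nbrs_in_cells_disjoint: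
  "{y \<in> cell 0. E x y} \<inter> {y \<in> cell 1. E x y} = {}"
  "({y \<in> cell 0. E x y} \<union> {y \<in> cell 1. E x y}) \<inter> {y \<in> cell 2. E x y} = {}"
  using cells_disjoint by auto

lemma degree_eq_nbr_counts: "x \<in> V \<Longrightarrow> nbr_count 0 x + nbr_count 1 x + nbr_count 2 x = m"
  using reg unfolding regular_def nbr_count_def neighbours_eq_cells
  by (simp add: card_Un_disjoint finite_nbrs_in_cell nbrs_in_cells_disjoint del: One_nat_def)

lemma eigen_eq_nbr_counts:
  assumes "x \<in> V"
  shows "nbr_count 0 x * a 0 + nbr_count 1 x * a 1 + nbr_count 2 x * a 2 = \<theta> * u x"
proof -
  have sum_cell: "(\<Sum>y \<in> {y \<in> cell j. E x y}. u y) = nbr_count j x * a j" for j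
    by (simp add: nbr_count_def cell_def)
  have "(\<Sum>y \<in> neighbours V E x. u y) = nbr_count 0 x * a 0 + nbr_count 1 x * a 1 + nbr_count 2 x * a 2"
    unfolding neighbours_eq_cells
    by (simp add: sum.union_disjoint finite_nbrs_in_cell nbrs_in_cells_disjoint sum_cell del: One_nat_def)
  then show ?thesis using eigen assms by simp
qed

lemma nbr_counts_determined_by_one:
  assumes "x \<in> V" "x' \<in> V" "u x = u x'" "k < 3" "nbr_count k x = nbr_count k x'" "j < 3"
  shows "nbr_count j x = nbr_count j x'"
proof -
  define n n' where "n i = real (nbr_count i x)" and "n' i = real (nbr_count i x')" for i
  have deg: "n 0 + n 1 + n 2 = n' 0 + n' 1 + n' 2"
    using degree_eq_nbr_counts assms(1,2) unfolding n_def n'_def by (metis of_nat_add)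
  have eig: "n 0 * a 0 + n 1 * a 1 + n 2 * a 2 = n' 0 * a 0 + n' 1 * a 1 + n' 2 * a 2"
    using eigen_eq_nbr_counts assms(1-3) unfolding n_def n'_def by metis
  have k: "n k = n' k" using assms(5) unfolding n_def n'_def by simp
  consider "k = 0" | "k = 1" | "k = 2" using assms(4) by linarith
  then have "n 0 = n' 0 \<and> n 1 = n' 1 \<and> n 2 = n' 2"
  proof cases
    case 1
    then show ?thesis
      using two_unknowns_unique[of "n 1" "n 2" "n' 1" "n' 2" "a 1" "a 2"] deg eig k dist_vals by auto
  next
    case 2
    then show ?thesis
      using two_unknowns_unique[of "n 0" "n 2" "n' 0" "n' 2" "a 0" "a 2"] deg eig k dist_vals by auto
  next
    case 3
    then show ?thesis
      using two_unknowns_unique[of "n 0" "n 1" "n' 0" "n' 1" "a 0" "a 1"] deg eig k dist_vals by auto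
  qed
  then show ?thesis using assms(6) unfolding n_def n'_def by (auto simp: less_Suc_eq eval_nat_numeral)
qed

end

locale three_valued_eigenvector_separated = three_valued_eigenvector +
  assumes conn: "connected_graph V E"
    and no_edges: "\<forall>x \<in> V. \<forall>y \<in> V. u x = a 0 \<longrightarrow> u y = a 2 \<longrightarrow> \<not> E x y"
    and beta1: "\<exists>\<beta>1. \<forall>x \<in> {x \<in> V. u x = a 1}. card {y \<in> {y \<in> V. u y = a 2}. E x y} = \<beta>1"
begin

lemma no_edge_cell0_cell2:
  assumes "x \<in> cell 0" "y \<in> cell 2"
  shows "\<not> E x y \<and> \<not> E y x"
proof -
  have "\<not> E x y" using no_edges assms by (simp add: cell_def)
  then show ?thesis using edge_sym[of y x] by blast
qed

lemma nbr_count_cell0_cell2: "x \<in> cell 0 \<Longrightarrow> nbr_count 2 x = 0"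
proof -
  assume "x \<in> cell 0"
  then have "{y \<in> cell 2. E x y} = {}" using no_edge_cell0_cell2 by blast
  then show ?thesis by (metis nbr_count_def card.empty)
qed

lemma nbr_count_cell2_cell0: "x \<in> cell 2 \<Longrightarrow> nbr_count 0 x = 0"
proof -
  assume "x \<in> cell 2"
  then have "{y \<in> cell 0. E x y} = {}" using no_edge_cell0_cell2 by blast
  then show ?thesis by (metis nbr_count_def card.empty)
qed

lemma nbr_count_constant:
  assumes "i < 3" "j < 3" "x \<in> cell i" "x' \<in> cell i"
  shows "nbr_count j x = nbr_count j x'"
proof -
  have xV: "x \<in> V" "x' \<in> V" "u x = u x'" using assms(3,4) by (auto simp: cell_def)
  obtain \<beta>1 where "\<And>x. x \<in> cell 1 \<Longrightarrow> nbr_count 2 x = \<beta>1"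
    using beta1 unfolding nbr_count_def cell_def by auto
  then have "\<exists>k < 3. nbr_count k x = nbr_count k x'"
    using assms nbr_count_cell0_cell2 nbr_count_cell2_cell0
    by (auto simp: eval_nat_numeral less_Suc_eq intro: exI[of _ 0] exI[of _ 2])
  then show ?thesis using nbr_counts_determined_by_one xV assms(2) by blast
qed

lemma nbr_count_uniform: "i < 3 \<Longrightarrow> j < 3 \<Longrightarrow> \<exists>c. \<forall>x \<in> cell i. nbr_count j x = c"
  using nbr_count_constant by blast

text \<open>Connectivity gives one edge leaving a union of cells; constancy of the counts spreads it.\<close>
lemma cell1_adj_cell0:
  assumes "x \<in> cell 1"
  shows "\<exists>y \<in> cell 0. E x y"
proof -
  obtain x0 x2 where "x0 \<in> cell 0" "x2 \<in> cell 2"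
    using cell_nonempty[of 0] cell_nonempty[of 2] by auto
  then have inside_outside: "x0 \<in> V \<inter> cell 0" "x2 \<in> V - cell 0"
    using cells_disjoint cell_subset by blast+
  obtain p q where pq: "p \<in> cell 0" "q \<notin> cell 0" "E p q"
    using connected_graph_edge_leaving[OF conn inside_outside] by blast
  have "q \<in> V" using edge_in_V pq(3) by blast
  moreover have "q \<notin> cell 2" using no_edge_cell0_cell2 pq(1,3) by blast
  ultimately have "q \<in> cell 1" using cells_cover pq(2) by blast
  moreover have "0 < nbr_count 0 q"
    using pq(1) edge_sym[OF pq(3)] nbr_count_pos_iff by blast
  ultimately have "0 < nbr_count 0 x"
    using nbr_count_constant[of 1 0 x q] assms by simp
  then show ?thesis using nbr_count_pos_iff by blast
qed

lemma cell2_adj_cell1: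
  assumes "x \<in> cell 2"
  shows "\<exists>y \<in> cell 1. E x y"
proof -
  obtain x0 x2 where "x0 \<in> cell 0" "x2 \<in> cell 2"
    using cell_nonempty[of 0] cell_nonempty[of 2] by auto
  then have inside_outside: "x0 \<in> V \<inter> (cell 0 \<union> cell 1)" "x2 \<in> V - (cell 0 \<union> cell 1)"
    using cells_disjoint cell_subset by blast+
  obtain p q where pq: "p \<in> cell 0 \<union> cell 1" "q \<notin> cell 0 \<union> cell 1" "E p q"
    using connected_graph_edge_leaving[OF conn inside_outside] by blast
  have "q \<in> V" using edge_in_V pq(3) by blast
  then have q: "q \<in> cell 2" using cells_cover pq(2) by blast
  then have "p \<in> cell 1" using no_edge_cell0_cell2 pq(1,3) by blast
  then have "0 < nbr_count 1 q"
    using edge_sym[OF pq(3)] nbr_count_pos_iff by blast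
  moreover have "nbr_count 1 x = nbr_count 1 q"
    using nbr_count_constant[of 2 1 x q] assms q by simp
  ultimately have "0 < nbr_count 1 x" by simp
  then show ?thesis using nbr_count_pos_iff by blast
qed

definition level :: "'a \<Rightarrow> nat" where
  "level x = (if u x = a 0 then 0 else if u x = a 1 then 1 else 2)"

lemma cell_eq_level: "i < 3 \<Longrightarrow> cell i = {x \<in> V. level x = i}"
  using cells_cover dist_vals
  by (auto simp: cell_def level_def eval_nat_numeral less_Suc_eq)

lemma level_less_3: "level x < 3"
  by (simp add: level_def)

lemma level_step:
  assumes "E x y"
  shows "level y \<le> Suc (level x)"
proof (cases "u x = a 0")
  case True
  have "y \<in> V" using edge_in_V[OF assms] by blast
  moreover have "u y \<noteq> a 2" using no_edges edge_in_V[OF assms] assms True by blast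
  ultimately have "u y = a 0 \<or> u y = a 1" using vals by blast
  then show ?thesis by (auto simp: level_def)
next
  case False
  then show ?thesis by (simp add: level_def)
qed

lemma level_descent:
  assumes "x \<in> V" "0 < level x"
  shows "\<exists>y \<in> V. E y x \<and> Suc (level y) = level x"
proof -
  consider "level x = 1" | "level x = 2" using assms(2) level_less_3[of x] by linarith
  then show ?thesis
  proof cases
    case 1
    then have "x \<in> cell 1" using cell_eq_level[of 1] assms(1) by simp
    then obtain y where "y \<in> cell 0" "E x y" using cell1_adj_cell0 by blast
    moreover have "level y = 0" using \<open>y \<in> cell 0\<close> cell_eq_level[of 0] by simp
    ultimately show ?thesis using 1 cell_subset edge_sym[of x y] by auto
  next
    case 2
    then have "x \<in> cell 2" using cell_eq_level[of 2] assms(1) by simp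
    then obtain y where "y \<in> cell 1" "E x y" using cell2_adj_cell1 by blast
    moreover have "level y = 1" using \<open>y \<in> cell 1\<close> cell_eq_level[of 1] by simp
    ultimately show ?thesis using 2 cell_subset edge_sym[of x y] by auto
  qed
qed

lemma dist_layer_cell0: "dist_layer V E (cell 0) i = (if i < 3 then cell i else {})"
  using dist_layer_eq_level[OF cell_eq_level[of 0, simplified] level_step level_descent]
    cell_eq_level level_less_3
  by auto

lemma completely_regular_cell0: "completely_regular V E (cell 0)"
proof (rule completely_regular_if_layer_counts_constant)
  show "cell 0 \<noteq> {}" using cell_nonempty by simp
  show "cell 0 \<subseteq> V" by (rule cell_subset)
  show "\<exists>c. \<forall>x \<in> dist_layer V E (cell 0) i. card {y \<in> dist_layer V E (cell 0) j. E x y} = c" for i j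
    using nbr_count_uniform[of i j] by (auto simp: dist_layer_cell0 nbr_count_def)
qed

lemma covering_radius_cell0: "covering_radius V E (cell 0) = 2"
proof -
  have "level ` V = {i :: nat. i < 3}"
  proof
    show "level ` V \<subseteq> {i. i < 3}" using level_less_3 by auto
    show "{i. i < 3} \<subseteq> level ` V"
    proof
      fix i :: nat assume "i \<in> {i. i < 3}"
      then have "i < 3" by simp
      then obtain x where "x \<in> cell i" using cell_nonempty by blast
      then have "x \<in> V" "level x = i" using cell_eq_level[OF \<open>i < 3\<close>] by blast+
      then show "i \<in> level ` V" by (metis imageI)
    qed
  qed
  moreover have "{i. i < 3} = {0, 1, 2 :: nat}" by auto
  ultimately show ?thesis
    using covering_radius_eq_Max_level[OF cell_eq_level[of 0, simplified] level_step level_descent]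
    by simp
qed

end

theorem theorem3p1:
  fixes V :: "'v set" and E :: "'v \<Rightarrow> 'v \<Rightarrow> bool" and m :: nat
    and u :: "'v \<Rightarrow> real" and \<theta> :: real and a :: "nat \<Rightarrow> real"
  assumes graph: "simple_graph V E"
    and conn: "connected_graph V E"
    and reg: "regular V E m"
    and eigen: "\<forall>x \<in> V. (\<Sum>y \<in> neighbours V E x. u y) = \<theta> * u x"
    and nonzero: "\<exists>x \<in> V. u x \<noteq> 0"
    and dist_vals: "a 0 \<noteq> a 1" "a 0 \<noteq> a 2" "a 1 \<noteq> a 2"
    and vals: "u ` V = {a 0, a 1, a 2}"
    and no_edges: "\<forall>x \<in> V. \<forall>y \<in> V. u x = a 0 \<longrightarrow> u y = a 2 \<longrightarrow> \<not> E x y"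
    and beta1: "\<exists>\<beta>1. \<forall>x \<in> {x \<in> V. u x = a 1}. card {y \<in> {y \<in> V. u y = a 2}. E x y} = \<beta>1"
  shows "(\<forall>i < 3. \<forall>j < 3. \<exists>c. \<forall>x \<in> {x \<in> V. u x = a i}.
            card {y \<in> {y \<in> V. u y = a j}. E x y} = c)
       \<and> completely_regular V E {x \<in> V. u x = a 0}
       \<and> (\<forall>i < 3. dist_layer V E {x \<in> V. u x = a 0} i = {x \<in> V. u x = a i})
       \<and> covering_radius V E {x \<in> V. u x = a 0} = 2"
proof -
  interpret three_valued_eigenvector_separated V E m u \<theta> a
    using graph conn reg eigen dist_vals vals no_edges beta1 by unfold_locales
  show ?thesis
    unfolding cell_def[symmetric] nbr_count_def[symmetric]
  proof (intro conjI)
    show "\<forall>i < 3. \<forall>j < 3. \<exists>c. \<forall>x \<in> cell i. nbr_count j x = c"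
      using nbr_count_uniform by blast
    show "\<forall>i < 3. dist_layer V E (cell 0) i = cell i"
      using dist_layer_cell0 by simp
  qed (fact completely_regular_cell0 covering_radius_cell0)+
qed

end
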